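(* Let $\mathcal M=(S,A,P)$ be an MDP, $T\subseteq S$ a set of sink target states, $s_0\in S$ with $\mathrm{Val}(s_0)>0$, and $\mathcal M'$ the pruned MDP. Let $\sigma^*$ be a strategy of $\mathcal M'$ minimizing $\mathbb E'_{\sigma,s_0}(\mathrm{len}_T)$ over all strategies $\sigma$ of $\mathcal M'$. Then (1) $\Pr_{\sigma^*,s_0}(\Diamond T)=\mathrm{Val}(s_0)$, and (2) $\mathbb E_{\sigma^*,s_0}(\mathrm{len}_T\mid\Diamond T)=\min_{\sigma\in\Sigma_{\mathcal M,s_0}(\Diamond T)}\mathbb E_{\sigma,s_0}(\mathrm{len}_T\mid\Diamond T)$.
   Context: An MDP is $\mathcal M=(S,A,P)$ with $S,A$ finite and $P$ a partial map $S\times A\to\mathrm{Dist}(S)$; $a$ is legal at $s$ if $P(s,a)$ is defined; $P(s,a,s')=P(s,a)(s')$. A strategy maps finite paths to distributions over legal actions at the last state (history-dependent, randomized). $\Pr_{\sigma,s}$, $\mathbb E_{\sigma,s}$ are the induced probability measure and expectation on infinite paths from $s$. States of $T$ are sinks (single legal action, self-loop with probability 1); $\Diamond T$ is the event of visiting $T$; $\mathrm{Val}(s)=\max_\sigma\Pr_{\sigma,s}(\Diamond T)$; $\Sigma_{\mathcal M,s}(\Diamond T)$ is the set of strategies with $\Pr_{\sigma,s}(\Diamond T)=\mathrm{Val}(s)$. $\mathrm{len}_T(\rho)$ is the least $i$ with $\rho[i]\in T$ ($\infty$ if none). $\mathbb E_{\sigma,s}(\mathrm{len}_T\mid\Diamond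 T)=\sum_{r\ge0}r\cdot\Pr_{\sigma,s}(\Diamond T\wedge\mathrm{len}_T=r)/\Pr_{\sigma,s}(\Diamond T)$. $\mathrm{Opt}_{\mathcal M}=\{(s,a): a\text{ legal at }s,\ \mathrm{Val}(s)=\sum_{s'}P(s,a,s')\mathrm{Val}(s')\}$. The pruned MDP $\mathcal M'=(S',A,P')$ has $S'=\{s:\mathrm{Val}(s)>0\}$ and $P'(s,a,s')=P(s,a,s')\mathrm{Val}(s')/\mathrm{Val}(s)$ if $s\in S'$ and $(s,a)\in\mathrm{Opt}_{\mathcal M}$ (undefined otherwise). Strategies of $\mathcal M'$ are identified with strategies of $\mathcal M$ that after every finite path only play actions $a$ with $(\mathrm{last}(\rho),a)\in\mathrm{Opt}_{\mathcal M}$; $\mathbb E'_{\sigma,s}$ is the expectation in $\mathcal M'$. *)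

theory Defs
  imports "HOL-Probability.Probability"
begin

text \<open>An MDP over a finite state type 's and a finite action type 'a is a partial map
  P :: 's => 'a => 's pmf option.  Action a is legal at s iff P s a is not None.\<close>

type_synonym ('s, 'a) mdp = "'s \<Rightarrow> 'a \<Rightarrow> 's pmf option"

definition legal :: "('s, 'a) mdp \<Rightarrow> 's \<Rightarrow> 'a \<Rightarrow> bool" where
  "legal P s a \<longleftrightarrow> P s a \<noteq> None"

definition trans :: "('s, 'a) mdp \<Rightarrow> 's \<Rightarrow> 'a \<Rightarrow> 's \<Rightarrow> real" where
  "trans P s a s' = (case P s a of None \<Rightarrow> 0 | Some d \<Rightarrow> pmf d s')"

text \<open>Finite paths are nonempty lists of states [s_0, ..., s_n]; a (history-dependent,
  randomized) strategy maps every finite path to a distribution over actions legal at the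
  last state.\<close>
definition is_strategy :: "('s, 'a) mdp \<Rightarrow> ('s list \<Rightarrow> 'a pmf) \<Rightarrow> bool" where
  "is_strategy P \<sigma> \<longleftrightarrow> (\<forall>\<rho>. \<rho> \<noteq> [] \<longrightarrow> set_pmf (\<sigma> \<rho>) \<subseteq> {a. legal P (last \<rho>) a})"

text \<open>Probability of the cylinder of a finite path under strategy \<sigma>, for a transition
  function Q (used both for M and for the pruned M').\<close>
definition path_prob :: "('s \<Rightarrow> 'a::finite \<Rightarrow> 's \<Rightarrow> real) \<Rightarrow> ('s list \<Rightarrow> 'a pmf) \<Rightarrow> 's list \<Rightarrow> real" where
  "path_prob Q \<sigma> \<rho> =
     (\<Prod>i < length \<rho> - 1. (\<Sum>a\<in>UNIV. pmf (\<sigma> (take (Suc i) \<rho>)) a * Q (\<rho> ! i) a (\<rho> ! Suc i)))"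

text \<open>Pr_{\<sigma>,s}(len_T = r): the probability that the first visit to T happens at step r.\<close>
definition len_prob :: "('s::finite \<Rightarrow> 'a::finite \<Rightarrow> 's \<Rightarrow> real) \<Rightarrow> ('s list \<Rightarrow> 'a pmf) \<Rightarrow> 's set \<Rightarrow> 's \<Rightarrow> nat \<Rightarrow> real" where
  "len_prob Q \<sigma> T s r =
     (\<Sum>\<rho> \<in> {\<rho>. length \<rho> = Suc r \<and> \<rho> ! 0 = s \<and> \<rho> ! r \<in> T \<and> (\<forall>i<r. \<rho> ! i \<notin> T)}. path_prob Q \<sigma> \<rho>)"

text \<open>Pr_{\<sigma>,s}(\<Diamond>T), as the sum of the disjoint events len_T = r.\<close>
definition reach_prob :: "('s::finite \<Rightarrow> 'a::finite \<Rightarrow> 's \<Rightarrow> real) \<Rightarrow> ('s list \<Rightarrow> 'a pmf) \<Rightarrow> 's set \<Rightarrow> 's \<Rightarrow> real" where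
  "reach_prob Q \<sigma> T s = (\<Sum>r. len_prob Q \<sigma> T s r)"

text \<open>E_{\<sigma>,s}(len_T), where len_T = \<infinity> on paths never visiting T.\<close>
definition exp_len :: "('s::finite \<Rightarrow> 'a::finite \<Rightarrow> 's \<Rightarrow> real) \<Rightarrow> ('s list \<Rightarrow> 'a pmf) \<Rightarrow> 's set \<Rightarrow> 's \<Rightarrow> ennreal" where
  "exp_len Q \<sigma> T s = (\<Sum>r. ennreal (real r * len_prob Q \<sigma> T s r))
      + (if reach_prob Q \<sigma> T s < 1 then \<infinity> else 0)"

definition cond_exp_len :: "('s::finite \<Rightarrow> 'a::finite \<Rightarrow> 's \<Rightarrow> real) \<Rightarrow> ('s list \<Rightarrow> 'a pmf) \<Rightarrow> 's set \<Rightarrow> 's \<Rightarrow> ennreal" where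
  "cond_exp_len Q \<sigma> T s = (\<Sum>r. ennreal (real r * len_prob Q \<sigma> T s r)) / ennreal (reach_prob Q \<sigma> T s)"

definition Val :: "('s::finite, 'a::finite) mdp \<Rightarrow> 's set \<Rightarrow> 's \<Rightarrow> real" where
  "Val P T s = (SUP \<sigma> \<in> {\<sigma>. is_strategy P \<sigma>}. reach_prob (trans P) \<sigma> T s)"

definition opt_strategies :: "('s::finite, 'a::finite) mdp \<Rightarrow> 's set \<Rightarrow> 's \<Rightarrow> ('s list \<Rightarrow> 'a pmf) set" where
  "opt_strategies P T s = {\<sigma>. is_strategy P \<sigma> \<and> reach_prob (trans P) \<sigma> T s = Val P T s}"

definition Opt :: "('s::finite, 'a::finite) mdp \<Rightarrow> 's set \<Rightarrow> ('s \<times> 'a) set" where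
  "Opt P T = {(s, a). legal P s a \<and> Val P T s = (\<Sum>s'\<in>UNIV. trans P s a s' * Val P T s')}"

text \<open>Transition function of the pruned MDP M' (0 where P' is undefined).\<close>
definition pruned_trans :: "('s::finite, 'a::finite) mdp \<Rightarrow> 's set \<Rightarrow> 's \<Rightarrow> 'a \<Rightarrow> 's \<Rightarrow> real" where
  "pruned_trans P T s a s' =
     (if Val P T s > 0 \<and> (s, a) \<in> Opt P T then trans P s a s' * Val P T s' / Val P T s else 0)"

text \<open>Strategies of M' identified with strategies of M playing only Opt actions.\<close>
definition is_pruned_strategy :: "('s::finite, 'a::finite) mdp \<Rightarrow> 's set \<Rightarrow> ('s list \<Rightarrow> 'a pmf) \<Rightarrow> bool" where
  "is_pruned_strategy P T \<sigma> \<longleftrightarrow> is_strategy P \<sigma> \<and>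
     (\<forall>\<rho>. \<rho> \<noteq> [] \<longrightarrow> (\<forall>a\<in>set_pmf (\<sigma> \<rho>). (last \<rho>, a) \<in> Opt P T))"

definition sinks :: "('s, 'a) mdp \<Rightarrow> 's set \<Rightarrow> bool" where
  "sinks P T \<longleftrightarrow> (\<forall>t\<in>T. \<exists>a0. (\<forall>a. legal P t a \<longleftrightarrow> a = a0) \<and> P t a0 = Some (return_pmf t))"

end

theory Submission
  imports Defs
begin

text \<open>
  Pruning rescales every transition \<open>s \<rightarrow> x\<close> by \<open>Val x / Val s\<close>.  Along a strategy of the pruned MDP
  these factors telescope, and since \<open>Val = 1\<close> on \<open>T\<close>, every path from \<open>s\<^sub>0\<close> first hitting \<open>T\<close> after
  \<open>r\<close> steps is \<open>1 / Val s\<^sub>0\<close> times as likely in \<open>M'\<close> as in \<open>M\<close>.  So a strategy of \<open>M'\<close> reaches \<open>T\<close> almost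
  surely in \<open>M'\<close> iff it is optimal in \<open>M\<close>, and then its expected length in \<open>M'\<close> is its conditional
  expected length in \<open>M\<close>.  Conversely, an optimal strategy of \<open>M\<close> plays only actions of \<open>Opt\<close> on
  histories of positive probability, so it agrees on these histories with a strategy of \<open>M'\<close>.
  Finally, \<open>\<sigma>\<^sup>*\<close> has finite expected length, hence reaches \<open>T\<close> almost surely in \<open>M'\<close>: a memoryless strategy
  of \<open>M'\<close> that always decreases, with positive probability, the distance to \<open>T\<close> along optimal actions
  reaches \<open>T\<close> in a time whose tail decays geometrically.
\<close>

definition step_prob :: "('s \<Rightarrow> 'a::finite \<Rightarrow> 's \<Rightarrow> real) \<Rightarrow> ('s list \<Rightarrow> 'a pmf) \<Rightarrow> 's list \<Rightarrow> 's \<Rightarrow> real"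
  where "step_prob Q \<sigma> \<rho> x = (\<Sum>a\<in>UNIV. pmf (\<sigma> \<rho>) a * Q (last \<rho>) a x)"

definition shift_strategy :: "('s list \<Rightarrow> 'a pmf) \<Rightarrow> 's \<Rightarrow> 's list \<Rightarrow> 'a pmf"
  where "shift_strategy \<sigma> s \<rho> = \<sigma> (s # \<rho>)"

definition memoryless :: "('s \<Rightarrow> 'a) \<Rightarrow> 's list \<Rightarrow> 'a pmf"
  where "memoryless f \<rho> = return_pmf (f (last \<rho>))"

lemma path_prob_singleton [simp]: "path_prob Q \<sigma> [s] = 1"
  by (simp add: path_prob_def)

lemma path_prob_Cons:
  "path_prob Q \<sigma> (s # x # \<pi>) = step_prob Q \<sigma> [s] x * path_prob Q (shift_strategy \<sigma> s) (x # \<pi>)"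
  unfolding path_prob_def step_prob_def shift_strategy_def
  by (simp add: prod.lessThan_Suc_shift del: prod.lessThan_Suc)

lemma path_prob_snoc:
  assumes "\<rho> \<noteq> []"
  shows "path_prob Q \<sigma> (\<rho> @ [x]) = path_prob Q \<sigma> \<rho> * step_prob Q \<sigma> \<rho> x"
proof -
  obtain n where n: "length \<rho> = Suc n"
    using assms by (cases \<rho>) auto
  have "path_prob Q \<sigma> \<rho> =
      (\<Prod>i<n. \<Sum>a\<in>UNIV. pmf (\<sigma> (take (Suc i) (\<rho> @ [x]))) a * Q ((\<rho> @ [x]) ! i) a ((\<rho> @ [x]) ! Suc i))"
    unfolding path_prob_def n by (intro prod.cong) (auto simp: nth_append n)
  moreover have "step_prob Q \<sigma> \<rho> x =
      (\<Sum>a\<in>UNIV. pmf (\<sigma> (take (Suc n) (\<rho> @ [x]))) a * Q ((\<rho> @ [x]) ! n) a ((\<rho> @ [x]) ! Suc n))"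
    using assms n by (simp add: step_prob_def nth_append last_conv_nth)
  ultimately show ?thesis
    by (simp add: path_prob_def n)
qed

lemma path_prob_cong:
  assumes "\<And>\<rho>'. \<rho>' \<noteq> [] \<Longrightarrow> hd \<rho>' = hd \<rho> \<Longrightarrow> \<sigma> \<rho>' = \<sigma>' \<rho>'"
  shows "path_prob Q \<sigma> \<rho> = path_prob Q \<sigma>' \<rho>"
proof -
  have "\<sigma> (take (Suc i) \<rho>) = \<sigma>' (take (Suc i) \<rho>)" if "i < length \<rho> - 1" for i
    using that assms by (cases \<rho>) auto
  then show ?thesis
    unfolding path_prob_def by (intro prod.cong sum.cong) auto
qed

lemma len_prob_cong:
  assumes "\<And>\<rho>'. \<rho>' \<noteq> [] \<Longrightarrow> hd \<rho>' = s \<Longrightarrow> \<sigma> \<rho>' = \<sigma>' \<rho>'"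
  shows "len_prob Q \<sigma> T s r = len_prob Q \<sigma>' T s r"
proof -
  have *: "path_prob Q \<sigma> \<rho> = path_prob Q \<sigma>' \<rho>" if "length \<rho> = Suc r" "\<rho> ! 0 = s" for \<rho>
  proof -
    have "hd \<rho> = s"
      using that by (cases \<rho>) auto
    show ?thesis
      by (rule path_prob_cong, rule assms) (use \<open>hd \<rho> = s\<close> in auto)
  qed
  show ?thesis
    unfolding len_prob_def by (intro sum.cong refl) (simp add: *)
qed

lemma len_prob_0: "len_prob Q \<sigma> T s 0 = (if s \<in> T then 1 else 0)"
proof -
  have "{\<rho>. length \<rho> = Suc 0 \<and> \<rho> ! 0 = s \<and> \<rho> ! 0 \<in> T \<and> (\<forall>i<0. \<rho> ! i \<notin> T)} =
      (if s \<in> T then {[s]} else {})"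
    by (auto simp: length_Suc_conv)
  then show ?thesis
    by (simp add: len_prob_def)
qed

lemma len_prob_Suc:
  fixes Q :: "'s::finite \<Rightarrow> 'a::finite \<Rightarrow> 's \<Rightarrow> real"
  shows "len_prob Q \<sigma> T s (Suc r) = (if s \<in> T then 0
           else \<Sum>x\<in>UNIV. step_prob Q \<sigma> [s] x * len_prob Q (shift_strategy \<sigma> s) T x r)"
proof (cases "s \<in> T")
  case True
  then show ?thesis
    by (auto simp: len_prob_def intro!: sum.neutral)
next
  case False
  define C where "C = {\<pi>::'s list. length \<pi> = Suc r \<and> \<pi> ! r \<in> T \<and> (\<forall>i<r. \<pi> ! i \<notin> T)}"
  have "finite C"
    using finite_lists_length_eq[of "UNIV :: 's set" "Suc r"]
    by (rule rev_finite_subset) (auto simp: C_def)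
  have paths: "{\<rho>. length \<rho> = Suc (Suc r) \<and> \<rho> ! 0 = s \<and> \<rho> ! Suc r \<in> T \<and> (\<forall>i<Suc r. \<rho> ! i \<notin> T)}
      = Cons s ` C"
  proof (intro set_eqI iffI)
    fix \<rho> assume "\<rho> \<in> {\<rho>. length \<rho> = Suc (Suc r) \<and> \<rho> ! 0 = s \<and> \<rho> ! Suc r \<in> T \<and> (\<forall>i<Suc r. \<rho> ! i \<notin> T)}"
    then obtain \<pi> where \<pi>: "\<rho> = s # \<pi>" "length \<pi> = Suc r" "\<pi> ! r \<in> T"
        "\<forall>i<Suc r. (s # \<pi>) ! i \<notin> T"
      by (cases \<rho>) auto
    have "\<forall>i<r. \<pi> ! i \<notin> T"
      using \<pi>(4) by (metis Suc_mono nth_Cons_Suc)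
    with \<pi> show "\<rho> \<in> Cons s ` C"
      by (auto simp: C_def)
  next
    fix \<rho> assume "\<rho> \<in> Cons s ` C"
    then show "\<rho> \<in> {\<rho>. length \<rho> = Suc (Suc r) \<and> \<rho> ! 0 = s \<and> \<rho> ! Suc r \<in> T \<and> (\<forall>i<Suc r. \<rho> ! i \<notin> T)}"
      using False by (auto simp: C_def less_Suc_eq_0_disj)
  qed
  have "len_prob Q \<sigma> T s (Suc r) = (\<Sum>\<pi>\<in>C. path_prob Q \<sigma> (s # \<pi>))"
    unfolding len_prob_def paths by (simp add: sum.reindex)
  also have "\<dots> = (\<Sum>\<pi>\<in>C. \<Sum>x\<in>UNIV.
      if x = hd \<pi> then step_prob Q \<sigma> [s] x * path_prob Q (shift_strategy \<sigma> s) \<pi> else 0)"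
    by (intro sum.cong refl) (auto simp: C_def length_Suc_conv path_prob_Cons)
  also have "\<dots> = (\<Sum>x\<in>UNIV. \<Sum>\<pi>\<in>C.
      if x = hd \<pi> then step_prob Q \<sigma> [s] x * path_prob Q (shift_strategy \<sigma> s) \<pi> else 0)"
    by (rule sum.swap)
  also have "\<dots> = (\<Sum>x\<in>UNIV. step_prob Q \<sigma> [s] x * len_prob Q (shift_strategy \<sigma> s) T x r)"
  proof (intro sum.cong refl)
    fix x
    have "{\<pi>. length \<pi> = Suc r \<and> \<pi> ! 0 = x \<and> \<pi> ! r \<in> T \<and> (\<forall>i<r. \<pi> ! i \<notin> T)} = {\<pi>\<in>C. x = hd \<pi>}"
      by (auto simp: C_def) (metis hd_conv_nth list.size(3) nat.distinct(1))+
    then show "(\<Sum>\<pi>\<in>C. if x = hd \<pi> then step_prob Q \<sigma> [s] x * path_prob Q (shift_strategy \<sigma> s) \<pi> else 0)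
        = step_prob Q \<sigma> [s] x * len_prob Q (shift_strategy \<sigma> s) T x r"
      using \<open>finite C\<close> by (simp add: len_prob_def sum.inter_filter sum_distrib_left if_distrib cong: if_cong)
  qed
  finally show ?thesis
    using False by simp
qed

lemma step_prob_memoryless [simp]: "step_prob Q (memoryless f) \<rho> x = Q (last \<rho>) (f (last \<rho>)) x"
  by (simp add: step_prob_def memoryless_def pmf_return indicator_def)

lemma len_prob_memoryless_Suc:
  fixes Q :: "'s::finite \<Rightarrow> 'a::finite \<Rightarrow> 's \<Rightarrow> real"
  shows "len_prob Q (memoryless f) T s (Suc r) = (if s \<in> T then 0
           else \<Sum>x\<in>UNIV. Q s (f s) x * len_prob Q (memoryless f) T x r)"
proof -
  have "len_prob Q (shift_strategy (memoryless f) s) T x r = len_prob Q (memoryless f) T x r" for x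
    by (rule len_prob_cong) (simp add: shift_strategy_def memoryless_def)
  then show ?thesis
    by (simp add: len_prob_Suc)
qed

lemma reach_prob_target:
  assumes "s \<in> T"
  shows "reach_prob Q \<sigma> T s = 1"
proof -
  have "len_prob Q \<sigma> T s = (\<lambda>r. if r = 0 then 1 else 0)"
    using assms by (intro ext, case_tac r) (simp_all add: len_prob_0 len_prob_Suc)
  then show ?thesis
    unfolding reach_prob_def using sums_single[of 0 "\<lambda>_. 1::real"] by (simp add: sums_iff)
qed

lemma pmf_weighted_sum_le:
  fixes p :: "'a::finite pmf"
  assumes "\<And>a. a \<in> set_pmf p \<Longrightarrow> f a \<le> c"
  shows "(\<Sum>a\<in>UNIV. pmf p a * f a) \<le> c"
proof -
  have "(\<Sum>a\<in>UNIV. pmf p a * f a) \<le> (\<Sum>a\<in>UNIV. pmf p a * c)"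
    using assms by (intro sum_mono) (metis mult_left_mono pmf_nonneg set_pmf_iff mult_zero_left order.refl)
  also have "\<dots> = c"
    by (simp add: sum_distrib_right[symmetric] sum_pmf_eq_1)
  finally show ?thesis .
qed

lemma pmf_weighted_sum_eq:
  fixes p :: "'a::finite pmf"
  assumes "\<And>a. a \<in> set_pmf p \<Longrightarrow> f a = c"
  shows "(\<Sum>a\<in>UNIV. pmf p a * f a) = c"
proof -
  have "(\<Sum>a\<in>UNIV. pmf p a * f a) = (\<Sum>a\<in>UNIV. pmf p a * c)"
    using assms by (intro sum.cong) (auto simp: set_pmf_iff)
  also have "\<dots> = c"
    by (simp add: sum_distrib_right[symmetric] sum_pmf_eq_1)
  finally show ?thesis .
qed

lemma weighted_sum_le_imp_eq:
  fixes p f g :: "'i \<Rightarrow> real"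
  assumes "finite A" "\<And>j. j \<in> A \<Longrightarrow> 0 \<le> p j" "\<And>j. j \<in> A \<Longrightarrow> 0 < p j \<Longrightarrow> f j \<le> g j"
    and "(\<Sum>j\<in>A. p j * g j) \<le> (\<Sum>j\<in>A. p j * f j)" "i \<in> A" "0 < p i"
  shows "f i = g i"
proof -
  have nonneg: "0 \<le> p j * (g j - f j)" if "j \<in> A" for j
    using assms(2,3)[OF that] by (cases "p j = 0") auto
  have "(\<Sum>j\<in>A. p j * (g j - f j)) \<le> 0"
    using assms(4) by (simp add: right_diff_distrib sum_subtractf)
  moreover have "0 \<le> (\<Sum>j\<in>A. p j * (g j - f j))"
    by (rule sum_nonneg) (rule nonneg)
  ultimately have "(\<Sum>j\<in>A. p j * (g j - f j)) = 0"
    by linarith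
  then have "p i * (g i - f i) = 0"
    using sum_nonneg_eq_0_iff[of A "\<lambda>j. p j * (g j - f j)"] nonneg assms(1,5) by blast
  then show ?thesis
    using assms(6) by simp
qed

lemma trans_nonneg: "0 \<le> trans P s a x"
  by (simp add: trans_def split: option.split)

lemma sum_trans_eq_1:
  fixes P :: "('s::finite, 'a) mdp"
  assumes "legal P s a"
  shows "(\<Sum>x\<in>UNIV. trans P s a x) = 1"
proof -
  obtain d where "P s a = Some d"
    using assms by (auto simp: legal_def)
  then show ?thesis
    by (simp add: trans_def sum_pmf_eq_1)
qed

lemma sum_trans_mult_const:
  fixes P :: "('s::finite, 'a) mdp"
  assumes "legal P s a"
  shows "(\<Sum>x\<in>UNIV. trans P s a x * c) = c"
  using sum_trans_eq_1[OF assms] by (simp add: sum_distrib_right[symmetric])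

lemma legal_if_is_strategy:
  "is_strategy P \<sigma> \<Longrightarrow> \<rho> \<noteq> [] \<Longrightarrow> a \<in> set_pmf (\<sigma> \<rho>) \<Longrightarrow> legal P (last \<rho>) a"
  by (auto simp: is_strategy_def)

lemma is_strategy_shift: "is_strategy P \<sigma> \<Longrightarrow> is_strategy P (shift_strategy \<sigma> s)"
  unfolding is_strategy_def shift_strategy_def by (metis last_ConsR list.distinct(1))

lemma is_pruned_strategy_shift:
  assumes "is_pruned_strategy P T \<sigma>"
  shows "is_pruned_strategy P T (shift_strategy \<sigma> s)"
proof -
  have "(last \<rho>, a) \<in> Opt P T" if "\<rho> \<noteq> []" "a \<in> set_pmf (\<sigma> (s # \<rho>))" for \<rho> a
    using assms that unfolding is_pruned_strategy_def by (metis last_ConsR list.distinct(1))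
  moreover have "is_strategy P (shift_strategy \<sigma> s)"
    using assms by (simp add: is_pruned_strategy_def is_strategy_shift)
  ultimately show ?thesis
    unfolding is_pruned_strategy_def by (simp add: shift_strategy_def)
qed

lemma is_pruned_strategy_memoryless:
  assumes "\<And>s. (s, f s) \<in> Opt P T"
  shows "is_pruned_strategy P T (memoryless f)"
proof -
  have "legal P s (f s)" for s
    using assms[of s] by (simp add: Opt_def)
  then show ?thesis
    using assms by (simp add: is_pruned_strategy_def is_strategy_def memoryless_def)
qed

lemma step_prob_nonneg: "(\<And>s a x. 0 \<le> Q s a x) \<Longrightarrow> 0 \<le> step_prob Q \<sigma> \<rho> x"
  unfolding step_prob_def by (intro sum_nonneg mult_nonneg_nonneg) auto

lemma path_prob_nonneg: "(\<And>s a x. 0 \<le> Q s a x) \<Longrightarrow> 0 \<le> path_prob Q \<sigma> \<rho>"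
  unfolding path_prob_def by (intro prod_nonneg sum_nonneg mult_nonneg_nonneg) auto

lemma len_prob_nonneg: "(\<And>s a x. 0 \<le> Q s a x) \<Longrightarrow> 0 \<le> len_prob Q \<sigma> T s r"
  unfolding len_prob_def by (intro sum_nonneg path_prob_nonneg) auto

lemma sum_step_prob_mult:
  "(\<Sum>x\<in>UNIV. step_prob Q \<sigma> \<rho> x * g x) =
     (\<Sum>a\<in>UNIV. pmf (\<sigma> \<rho>) a * (\<Sum>x\<in>UNIV. Q (last \<rho>) a x * g x))"
  unfolding step_prob_def sum_distrib_right sum_distrib_left
  by (subst sum.swap) (simp add: mult.assoc)

lemma sum_len_prob_le_superharmonic:
  assumes "is_strategy P \<sigma>"
    and nonneg: "\<And>s. 0 \<le> g s" and target: "\<And>s. s \<in> T \<Longrightarrow> 1 \<le> g s"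
    and superharmonic: "\<And>s a. s \<notin> T \<Longrightarrow> legal P s a \<Longrightarrow> (\<Sum>x\<in>UNIV. trans P s a x * g x) \<le> g s"
  shows "(\<Sum>r<n. len_prob (trans P) \<sigma> T s r) \<le> g s"
  using assms(1)
proof (induction n arbitrary: \<sigma> s)
  case 0
  then show ?case
    by (simp add: nonneg)
next
  case (Suc n)
  show ?case
  proof (cases "s \<in> T")
    case True
    then show ?thesis
      by (simp add: sum.lessThan_Suc_shift len_prob_0 len_prob_Suc target del: sum.lessThan_Suc)
  next
    case False
    have "(\<Sum>r<Suc n. len_prob (trans P) \<sigma> T s r) =
        (\<Sum>r<n. \<Sum>x\<in>UNIV. step_prob (trans P) \<sigma> [s] x * len_prob (trans P) (shift_strategy \<sigma> s) T x r)"
      using False by (simp add: sum.lessThan_Suc_shift len_prob_0 len_prob_Suc del: sum.lessThan_Suc)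
    also have "\<dots> = (\<Sum>x\<in>UNIV. step_prob (trans P) \<sigma> [s] x * (\<Sum>r<n. len_prob (trans P) (shift_strategy \<sigma> s) T x r))"
      by (subst sum.swap) (simp add: sum_distrib_left)
    also have "\<dots> \<le> (\<Sum>x\<in>UNIV. step_prob (trans P) \<sigma> [s] x * g x)"
      by (intro sum_mono mult_left_mono Suc.IH is_strategy_shift Suc.prems step_prob_nonneg trans_nonneg)
    also have "\<dots> \<le> g s"
      unfolding sum_step_prob_mult
      by (rule pmf_weighted_sum_le) (use False Suc.prems in \<open>auto intro!: superharmonic dest: legal_if_is_strategy\<close>)
    finally show ?thesis .
  qed
qed

lemma summable_len_prob:
  assumes "is_strategy P \<sigma>"
  shows "summable (len_prob (trans P) \<sigma> T s)"
proof (rule bounded_imp_summable)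
  show "0 \<le> len_prob (trans P) \<sigma> T s n" for n
    by (intro len_prob_nonneg trans_nonneg)
  show "sum (len_prob (trans P) \<sigma> T s) {..n} \<le> 1" for n
    using sum_len_prob_le_superharmonic[OF assms, where g = "\<lambda>_. 1" and n = "Suc n"]
    by (simp add: lessThan_Suc_atMost sum_trans_eq_1)
qed

lemma reach_prob_le_superharmonic:
  assumes "is_strategy P \<sigma>"
    and "\<And>s. 0 \<le> g s" "\<And>s. s \<in> T \<Longrightarrow> 1 \<le> g s"
    and "\<And>s a. s \<notin> T \<Longrightarrow> legal P s a \<Longrightarrow> (\<Sum>x\<in>UNIV. trans P s a x * g x) \<le> g s"
  shows "reach_prob (trans P) \<sigma> T s \<le> g s"
  unfolding reach_prob_def
  by (rule suminf_le_const[OF summable_len_prob[OF assms(1)]] sum_len_prob_le_superharmonic[OF assms])+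

lemma reach_prob_nonneg: "is_strategy P \<sigma> \<Longrightarrow> 0 \<le> reach_prob (trans P) \<sigma> T s"
  unfolding reach_prob_def by (intro suminf_nonneg summable_len_prob len_prob_nonneg trans_nonneg)

lemma reach_prob_le_1: "is_strategy P \<sigma> \<Longrightarrow> reach_prob (trans P) \<sigma> T s \<le> 1"
  by (rule reach_prob_le_superharmonic[where g = "\<lambda>_. 1"]) (auto simp: sum_trans_eq_1)

lemma len_prob_le_reach_prob:
  assumes "is_strategy P \<sigma>"
  shows "len_prob (trans P) \<sigma> T s r \<le> reach_prob (trans P) \<sigma> T s"
  unfolding reach_prob_def
  using sum_le_suminf[OF summable_len_prob[OF assms], of "{r}"]
  by (simp add: len_prob_nonneg trans_nonneg)

lemma reach_prob_step:
  assumes "is_strategy P \<sigma>" "s \<notin> T"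
  shows "reach_prob (trans P) \<sigma> T s =
    (\<Sum>x\<in>UNIV. step_prob (trans P) \<sigma> [s] x * reach_prob (trans P) (shift_strategy \<sigma> s) T x)"
proof -
  have summable: "summable (len_prob (trans P) (shift_strategy \<sigma> s) T x)" for x
    by (intro summable_len_prob is_strategy_shift assms(1))
  have "reach_prob (trans P) \<sigma> T s = (\<Sum>r. len_prob (trans P) \<sigma> T s (Suc r))"
    using suminf_split_head[OF summable_len_prob[OF assms(1)]] assms(2)
    by (simp add: reach_prob_def len_prob_0)
  also have "\<dots> = (\<Sum>r. \<Sum>x\<in>UNIV. step_prob (trans P) \<sigma> [s] x * len_prob (trans P) (shift_strategy \<sigma> s) T x r)"
    using assms(2) by (simp add: len_prob_Suc)
  also have "\<dots> = (\<Sum>x\<in>UNIV. step_prob (trans P) \<sigma> [s] x * reach_prob (trans P) (shift_strategy \<sigma> s) T x)"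
    unfolding reach_prob_def suminf_mult[OF summable, symmetric]
    by (intro suminf_sum summable_mult summable)
  finally show ?thesis .
qed

subsection \<open>Hitting times of finite Markov chains\<close>

lemma summable_power_div:
  fixes \<rho> :: real
  assumes "0 \<le> \<rho>" "\<rho> < 1" "0 < k"
  shows "summable (\<lambda>n. \<rho> ^ (n div k))"
proof -
  define \<rho>' where "\<rho>' = max \<rho> (1/2)"
  define \<theta> where "\<theta> = root k \<rho>'"
  have \<rho>': "0 < \<rho>'" "\<rho>' < 1" "\<rho> \<le> \<rho>'"
    using assms by (auto simp: \<rho>'_def)
  have \<theta>: "0 < \<theta>" "\<theta> < 1" "\<theta> ^ k = \<rho>'"
    using \<rho>' assms(3) by (auto simp: \<theta>_def real_root_gt_zero)
  have "norm (\<rho> ^ (n div k)) \<le> \<theta> ^ n / \<rho>'" for n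
  proof -
    have "n \<le> k * (n div k) + k"
      using assms(3) by (metis add_le_mono1 div_mult_mod_eq le_add1 less_imp_le_nat mod_less_divisor mult.commute add.commute)
    then have "\<theta> ^ (k * (n div k) + k) \<le> \<theta> ^ n"
      using \<theta> by (intro power_decreasing) auto
    moreover have "\<rho>' ^ (n div k) * \<rho>' = \<theta> ^ (k * (n div k) + k)"
      using \<theta> by (simp add: power_add power_mult)
    ultimately have "\<rho>' ^ (n div k) \<le> \<theta> ^ n / \<rho>'"
      using \<rho>' by (simp add: pos_le_divide_eq)
    moreover have "\<rho> ^ (n div k) \<le> \<rho>' ^ (n div k)"
      using assms(1) \<rho>' by (intro power_mono) auto
    ultimately show ?thesis
      using assms(1) by simp
  qed
  moreover have "summable (\<lambda>n. \<theta> ^ n / \<rho>')"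
    using \<theta> by (intro summable_divide summable_geometric) simp
  ultimately show ?thesis
    by (rule summable_comparison_test'[rotated])
qed

lemma summable_of_nat_mult_diff:
  fixes a :: "nat \<Rightarrow> real"
  assumes "\<And>r. 0 \<le> a r" "\<And>r. a (Suc r) \<le> a r" "summable a"
  shows "summable (\<lambda>r. real r * (a r - a (Suc r)))"
proof (rule bounded_imp_summable)
  show "0 \<le> real r * (a r - a (Suc r))" for r
    using assms(2)[of r] by simp
  have partial: "(\<Sum>r<n. real r * (a r - a (Suc r))) + real n * a n = (\<Sum>r<n. a (Suc r))" for n
    by (induction n) (simp_all add: algebra_simps)
  have "(\<Sum>r<n. real r * (a r - a (Suc r))) \<le> (\<Sum>r. a (Suc r))" for n
  proof -
    have "(\<Sum>r<n. a (Suc r)) \<le> (\<Sum>r. a (Suc r))"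
      using summable_ignore_initial_segment[OF assms(3), of 1] assms(1) by (intro sum_le_suminf) auto
    moreover have "0 \<le> real n * a n"
      using assms(1) by simp
    ultimately show ?thesis
      using partial[of n] by linarith
  qed
  then show "sum (\<lambda>r. real r * (a r - a (Suc r))) {..n} \<le> (\<Sum>r. a (Suc r))" for n
    by (simp only: lessThan_Suc_atMost[symmetric])
qed

lemma positive_values_lower_bound:
  fixes f :: "'a::finite \<Rightarrow> real"
  obtains p where "0 < p" "p \<le> 1" "\<And>x. 0 < f x \<Longrightarrow> p \<le> f x"
proof
  define p where "p = Min (insert 1 (f ` {x. 0 < f x}))"
  show "0 < p" "p \<le> 1"
    by (auto simp: p_def)
  show "p \<le> f x" if "0 < f x" for x
    unfolding p_def by (rule Min_le) (use that in auto)
qed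

text \<open>\<open>avoid_prob K T n s\<close> is the probability that the Markov chain with kernel \<open>K\<close> started in
  \<open>s\<close> avoids \<open>T\<close> at the times \<open>0, \<dots>, n - 1\<close>.\<close>
fun avoid_prob :: "('s::finite \<Rightarrow> 's \<Rightarrow> real) \<Rightarrow> 's set \<Rightarrow> nat \<Rightarrow> 's \<Rightarrow> real" where
  "avoid_prob K T 0 s = 1"
| "avoid_prob K T (Suc n) s = (if s \<in> T then 0 else \<Sum>x\<in>UNIV. K s x * avoid_prob K T n x)"

locale substochastic_kernel =
  fixes K :: "'s::finite \<Rightarrow> 's \<Rightarrow> real"
  assumes kernel_nonneg: "0 \<le> K s x"
    and kernel_row_sum_le_1: "(\<Sum>x\<in>UNIV. K s x) \<le> 1"
begin

lemma avoid_prob_nonneg: "0 \<le> avoid_prob K T n s"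
  by (induction n arbitrary: s) (auto intro!: sum_nonneg mult_nonneg_nonneg kernel_nonneg)

lemma avoid_prob_Suc_le: "avoid_prob K T (Suc n) s \<le> avoid_prob K T n s"
proof (induction n arbitrary: s)
  case 0
  have "(\<Sum>x\<in>UNIV. K s x * 1) \<le> 1"
    using kernel_row_sum_le_1 by simp
  then show ?case
    by simp
next
  case (Suc n)
  then show ?case
    by (auto intro!: sum_mono mult_left_mono kernel_nonneg)
qed

lemma avoid_prob_le_1: "avoid_prob K T n s \<le> 1"
  using lift_Suc_antimono_le[of "\<lambda>n. avoid_prob K T n s", OF avoid_prob_Suc_le, of 0 n] by simp

lemma avoid_prob_add_le:
  assumes "\<And>s. avoid_prob K T k s \<le> \<rho>"
  shows "avoid_prob K T (n + k) s \<le> \<rho> * avoid_prob K T n s"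
proof (induction n arbitrary: s)
  case 0
  then show ?case
    using assms by simp
next
  case (Suc n)
  have "(\<Sum>x\<in>UNIV. K s x * avoid_prob K T (n + k) x) \<le> (\<Sum>x\<in>UNIV. K s x * (\<rho> * avoid_prob K T n x))"
    by (intro sum_mono mult_left_mono Suc.IH kernel_nonneg)
  then show ?case
    by (simp add: sum_distrib_left mult.left_commute)
qed

lemma avoid_prob_le_power_div:
  assumes "\<And>s. avoid_prob K T k s \<le> \<rho>" "0 \<le> \<rho>"
  shows "avoid_prob K T n s \<le> \<rho> ^ (n div k)"
proof -
  have "avoid_prob K T (j * k + i) s \<le> \<rho> ^ j" for i j
  proof (induction j arbitrary: s)
    case 0
    then show ?case
      by (simp add: avoid_prob_le_1)
  next
    case (Suc j)
    have "avoid_prob K T (Suc j * k + i) s \<le> \<rho> * avoid_prob K T (j * k + i) s"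
      using avoid_prob_add_le[OF assms(1), of "j * k + i"] by (simp add: algebra_simps)
    also have "\<dots> \<le> \<rho> * \<rho> ^ j"
      by (intro mult_left_mono Suc.IH assms(2))
    finally show ?case
      by simp
  qed
  from this[of "n div k" "n mod k"] show ?thesis
    by simp
qed

text \<open>\<open>\<Sum>n. avoid_prob K T n s\<close> is the expected hitting time of \<open>T\<close>.\<close>
lemma summable_avoid_prob:
  assumes "\<And>s. avoid_prob K T k s \<le> \<rho>" "\<rho> < 1" "0 < k"
  shows "summable (\<lambda>n. avoid_prob K T n s)"
proof -
  have "0 \<le> \<rho>"
    using assms(1) avoid_prob_nonneg order_trans by blast
  then show ?thesis
    using avoid_prob_le_power_div[OF assms(1)] avoid_prob_nonneg
    by (intro summable_comparison_test'[OF summable_power_div[OF _ assms(2,3)]]) auto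
qed

end

subsection \<open>The value function and optimal actions\<close>

lemma reach_prob_first_action:
  fixes P :: "('s::finite, 'a::finite) mdp"
  assumes "legal P s a" "s \<notin> T" "\<And>x. is_strategy P (\<tau> x)"
  shows "\<exists>\<sigma>. is_strategy P \<sigma> \<and>
    reach_prob (trans P) \<sigma> T s = (\<Sum>x\<in>UNIV. trans P s a x * reach_prob (trans P) (\<tau> x) T x)"
proof -
  \<comment> \<open>play \<open>a\<close> first, then \<open>\<tau> x\<close> on the history starting at the successor \<open>x\<close>\<close>
  define \<sigma> where "\<sigma> \<rho> = (if \<rho> = [s] then return_pmf a
      else if hd \<rho> = s \<and> tl \<rho> \<noteq> [] then \<tau> (hd (tl \<rho>)) (tl \<rho>) else \<tau> (hd \<rho>) \<rho>)" for \<rho>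
  have strategy: "is_strategy P \<sigma>"
    unfolding is_strategy_def
  proof (intro allI impI)
    fix \<rho> :: "'s list"
    assume "\<rho> \<noteq> []"
    then show "set_pmf (\<sigma> \<rho>) \<subseteq> {b. legal P (last \<rho>) b}"
      using assms(1) unfolding \<sigma>_def
      by (cases \<rho>) (auto, (metis legal_if_is_strategy[OF assms(3)] last_ConsL last_ConsR list.distinct(1))+)
  qed
  have "step_prob (trans P) \<sigma> [s] x = trans P s a x" for x
    by (simp add: step_prob_def \<sigma>_def pmf_return indicator_def)
  moreover have "reach_prob (trans P) (shift_strategy \<sigma> s) T x = reach_prob (trans P) (\<tau> x) T x" for x
    unfolding reach_prob_def
    by (intro arg_cong[where f = suminf] ext len_prob_cong) (auto simp: shift_strategy_def \<sigma>_def)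
  ultimately show ?thesis
    using strategy reach_prob_step[OF strategy assms(2)] by auto
qed

lemma Opt_nonempty_if_is_pruned_strategy:
  assumes "is_pruned_strategy P T \<sigma>"
  shows "\<exists>a. (s, a) \<in> Opt P T"
  using set_pmf_not_empty[of "\<sigma> [s]"] assms unfolding is_pruned_strategy_def
  by (metis ex_in_conv last_ConsL not_Cons_self2)

locale pruned_mdp =
  fixes P :: "('s::finite, 'a::finite) mdp" and T :: "'s set"
  assumes sinks: "sinks P T"
    and Opt_nonempty: "\<exists>a. (s, a) \<in> Opt P T"
begin

abbreviation V :: "'s \<Rightarrow> real" where "V \<equiv> Val P T"
abbreviation reach :: "('s list \<Rightarrow> 'a pmf) \<Rightarrow> 's \<Rightarrow> real" where
  "reach \<sigma> s \<equiv> reach_prob (trans P) \<sigma> T s"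

definition opt_act :: "'s \<Rightarrow> 'a" where
  "opt_act s = (SOME a. (s, a) \<in> Opt P T)"

lemma Opt_opt_act: "(s, opt_act s) \<in> Opt P T"
  unfolding opt_act_def by (rule someI_ex[OF Opt_nonempty])

lemma is_strategy_opt_act: "is_strategy P (memoryless opt_act)"
  using is_pruned_strategy_memoryless[OF Opt_opt_act] by (simp add: is_pruned_strategy_def)

lemma bdd_above_reach: "bdd_above ((\<lambda>\<sigma>. reach \<sigma> s) ` {\<sigma>. is_strategy P \<sigma>})"
  by (rule bdd_aboveI[where M = 1]) (auto intro: reach_prob_le_1)

lemma reach_prob_le_Val: "is_strategy P \<sigma> \<Longrightarrow> reach \<sigma> s \<le> V s"
  unfolding Val_def by (rule cSUP_upper) (auto simp: bdd_above_reach)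

lemma Val_le: "(\<And>\<sigma>. is_strategy P \<sigma> \<Longrightarrow> reach \<sigma> s \<le> c) \<Longrightarrow> V s \<le> c"
  unfolding Val_def by (rule cSUP_least) (use is_strategy_opt_act in auto)

lemma Val_nonneg: "0 \<le> V s"
  using reach_prob_nonneg[OF is_strategy_opt_act] reach_prob_le_Val[OF is_strategy_opt_act]
  by (rule order_trans)

lemma Val_le_1: "V s \<le> 1"
  by (rule Val_le) (rule reach_prob_le_1)

lemma Val_target:
  assumes "s \<in> T"
  shows "V s = 1"
  using Val_le_1[of s] reach_prob_le_Val[OF is_strategy_opt_act, of s] reach_prob_target[OF assms, of "trans P" "memoryless opt_act"]
  by linarith

lemma near_optimal_strategy:
  assumes "0 < e"
  shows "\<exists>\<sigma>. is_strategy P \<sigma> \<and> V s - e < reach \<sigma> s"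
proof -
  have "V s - e < (SUP \<sigma>\<in>{\<sigma>. is_strategy P \<sigma>}. reach \<sigma> s)"
    using assms by (simp add: Val_def)
  moreover have "{\<sigma>. is_strategy P \<sigma>} \<noteq> {}"
    using is_strategy_opt_act by blast
  ultimately show ?thesis
    using less_cSUP_iff[OF _ bdd_above_reach] by blast
qed

lemma Val_step_le:
  assumes "legal P s a"
  shows "(\<Sum>x\<in>UNIV. trans P s a x * V x) \<le> V s"
proof (cases "s \<in> T")
  case True
  have "(\<Sum>x\<in>UNIV. trans P s a x * V x) \<le> (\<Sum>x\<in>UNIV. trans P s a x * 1)"
    by (intro sum_mono mult_left_mono Val_le_1 trans_nonneg)
  then show ?thesis
    using True assms by (simp add: sum_trans_eq_1 Val_target)
next
  case False
  show ?thesis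
  proof (rule field_le_epsilon)
    fix e :: real
    assume "0 < e"
    have "\<forall>x. \<exists>\<sigma>. is_strategy P \<sigma> \<and> V x - e < reach \<sigma> x"
      using near_optimal_strategy[OF \<open>0 < e\<close>] by blast
    from choice[OF this] obtain \<tau> where "\<forall>x. is_strategy P (\<tau> x) \<and> V x - e < reach (\<tau> x) x" ..
    then have \<tau>: "\<And>x. is_strategy P (\<tau> x)" "\<And>x. V x - e < reach (\<tau> x) x"
      by blast+
    obtain \<sigma> where \<sigma>: "is_strategy P \<sigma>" "reach \<sigma> s = (\<Sum>x\<in>UNIV. trans P s a x * reach (\<tau> x) x)"
      using reach_prob_first_action[where \<tau> = \<tau>, OF assms False \<tau>(1)] by blast
    have "(\<Sum>x\<in>UNIV. trans P s a x * V x) - e = (\<Sum>x\<in>UNIV. trans P s a x * (V x - e))"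
      using sum_trans_mult_const[OF assms, of e] by (simp add: right_diff_distrib sum_subtractf)
    also have "\<dots> \<le> reach \<sigma> s"
      unfolding \<sigma>(2) using \<tau>(2) by (intro sum_mono mult_left_mono trans_nonneg) (simp add: less_imp_le)
    also have "\<dots> \<le> V s"
      by (rule reach_prob_le_Val[OF \<sigma>(1)])
    finally show "(\<Sum>x\<in>UNIV. trans P s a x * V x) \<le> V s + e"
      by simp
  qed
qed

lemma trans_sink:
  assumes "t \<in> T" "legal P t a"
  shows "trans P t a x = (if x = t then 1 else 0)"
proof -
  obtain a0 where "\<forall>b. legal P t b \<longleftrightarrow> b = a0" "P t a0 = Some (return_pmf t)"
    using sinks assms(1) unfolding sinks_def by blast
  then show ?thesis
    using assms(2) by (auto simp: trans_def)
qed

lemma Opt_target: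
  assumes "t \<in> T" "legal P t a"
  shows "(t, a) \<in> Opt P T"
proof -
  have "(\<Sum>x\<in>UNIV. trans P t a x * V x) = V t"
    by (simp add: trans_sink[OF assms] if_distrib[of "\<lambda>c. c * _"] cong: if_cong)
  then show ?thesis
    using assms(2) by (simp add: Opt_def)
qed

lemma Opt_if_reach_optimal:
  assumes "is_strategy P \<sigma>" "reach \<sigma> s = V s" "a \<in> set_pmf (\<sigma> [s])"
  shows "(s, a) \<in> Opt P T"
proof -
  have legal: "legal P s b" if "b \<in> set_pmf (\<sigma> [s])" for b
    using legal_if_is_strategy[OF assms(1) _ that] by simp
  show ?thesis
  proof (cases "s \<in> T")
    case True
    then show ?thesis
      using Opt_target legal[OF assms(3)] by blast
  next
    case False
    define c where "c b = (\<Sum>x\<in>UNIV. trans P s b x * V x)" for b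
    have "(\<Sum>b\<in>UNIV. pmf (\<sigma> [s]) b * V s) = V s"
      by (rule pmf_weighted_sum_eq) simp
    also have "V s \<le> (\<Sum>x\<in>UNIV. step_prob (trans P) \<sigma> [s] x * V x)"
      unfolding assms(2)[symmetric] reach_prob_step[OF assms(1) False]
      by (intro sum_mono mult_left_mono reach_prob_le_Val is_strategy_shift assms(1)
          step_prob_nonneg trans_nonneg)
    also have "\<dots> = (\<Sum>b\<in>UNIV. pmf (\<sigma> [s]) b * c b)"
      by (simp add: sum_step_prob_mult c_def)
    finally have "c a = V s"
      using assms(3) legal Val_step_le
      by (intro weighted_sum_le_imp_eq[where p = "pmf (\<sigma> [s])"]) (auto simp: c_def set_pmf_iff)
    then show ?thesis
      using legal[OF assms(3)] by (simp add: Opt_def c_def)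
  qed
qed

lemma reach_shift_optimal:
  assumes "is_strategy P \<sigma>" "reach \<sigma> s = V s" "0 < step_prob (trans P) \<sigma> [s] x"
  shows "reach (shift_strategy \<sigma> s) x = V x"
proof (cases "s \<in> T")
  case True
  have "step_prob (trans P) \<sigma> [s] x = (if x = s then 1 else 0)"
    unfolding step_prob_def
    by (rule pmf_weighted_sum_eq) (use True assms(1) in \<open>auto dest: legal_if_is_strategy simp: trans_sink\<close>)
  then show ?thesis
    using True assms(3) by (auto simp: reach_prob_target Val_target split: if_splits)
next
  case False
  have "(\<Sum>y\<in>UNIV. step_prob (trans P) \<sigma> [s] y * V y) \<le> V s"
    unfolding sum_step_prob_mult
    by (simp, intro pmf_weighted_sum_le Val_step_le) (use legal_if_is_strategy[OF assms(1), of "[s]"] in simp)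
  also have "\<dots> = (\<Sum>y\<in>UNIV. step_prob (trans P) \<sigma> [s] y * reach (shift_strategy \<sigma> s) y)"
    using assms(2) reach_prob_step[OF assms(1) False] by simp
  finally show ?thesis
    using assms(3) reach_prob_le_Val[OF is_strategy_shift[OF assms(1)]]
    by (intro weighted_sum_le_imp_eq[where p = "step_prob (trans P) \<sigma> [s]"])
      (auto intro: step_prob_nonneg trans_nonneg)
qed

lemma Opt_along_reach_optimal:
  assumes "is_strategy P \<sigma>" "reach \<sigma> s = V s" "0 < path_prob (trans P) \<sigma> (s # \<pi>)"
    "a \<in> set_pmf (\<sigma> (s # \<pi>))"
  shows "(last (s # \<pi>), a) \<in> Opt P T"
  using assms
proof (induction \<pi> arbitrary: \<sigma> s)
  case Nil
  then show ?case
    using Opt_if_reach_optimal by simp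
next
  case (Cons x \<pi>)
  have "0 \<le> step_prob (trans P) \<sigma> [s] x" "0 \<le> path_prob (trans P) (shift_strategy \<sigma> s) (x # \<pi>)"
    by (intro step_prob_nonneg path_prob_nonneg trans_nonneg)+
  then have pos: "0 < step_prob (trans P) \<sigma> [s] x" "0 < path_prob (trans P) (shift_strategy \<sigma> s) (x # \<pi>)"
    using Cons.prems(3) by (auto simp: path_prob_Cons zero_less_mult_iff)
  have "(last (x # \<pi>), a) \<in> Opt P T"
  proof (rule Cons.IH)
    show "is_strategy P (shift_strategy \<sigma> s)"
      by (rule is_strategy_shift[OF Cons.prems(1)])
    show "reach (shift_strategy \<sigma> s) x = V x"
      by (rule reach_shift_optimal[OF Cons.prems(1,2) pos(1)])
    show "a \<in> set_pmf (shift_strategy \<sigma> s (x # \<pi>))"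
      using Cons.prems(4) by (simp add: shift_strategy_def)
  qed (rule pos(2))
  then show ?case
    by simp
qed

definition prune :: "('s list \<Rightarrow> 'a pmf) \<Rightarrow> 's list \<Rightarrow> 'a pmf" where
  "prune \<sigma> \<rho> = (if \<forall>a\<in>set_pmf (\<sigma> \<rho>). (last \<rho>, a) \<in> Opt P T then \<sigma> \<rho> else memoryless opt_act \<rho>)"

lemma is_pruned_strategy_prune:
  assumes "is_strategy P \<sigma>"
  shows "is_pruned_strategy P T (prune \<sigma>)"
  using assms is_pruned_strategy_memoryless[OF Opt_opt_act]
  unfolding is_pruned_strategy_def is_strategy_def prune_def by auto

lemma path_prob_prune:
  assumes "is_strategy P \<sigma>" "reach \<sigma> s = V s" "\<rho> \<noteq> []" "hd \<rho> = s"
  shows "path_prob (trans P) (prune \<sigma>) \<rho> = path_prob (trans P) \<sigma> \<rho>"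
  using assms(3,4)
proof (induction \<rho> rule: rev_induct)
  case (snoc x \<rho>)
  show ?case
  proof (cases "\<rho> = []")
    case False
    then have IH: "path_prob (trans P) (prune \<sigma>) \<rho> = path_prob (trans P) \<sigma> \<rho>"
      using snoc by simp
    have "prune \<sigma> \<rho> = \<sigma> \<rho>" if "0 < path_prob (trans P) \<sigma> \<rho>"
    proof -
      have "\<rho> = s # tl \<rho>"
        using False snoc.prems(2) by (cases \<rho>) auto
      then show ?thesis
        using Opt_along_reach_optimal[OF assms(1,2), of "tl \<rho>"] that by (simp add: prune_def)
    qed
    moreover have "0 \<le> path_prob (trans P) \<sigma> \<rho>"
      by (intro path_prob_nonneg trans_nonneg)
    ultimately show ?thesis
      using False IH by (cases "path_prob (trans P) \<sigma> \<rho> = 0") (auto simp: path_prob_snoc step_prob_def)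
  qed simp
qed simp

lemma len_prob_prune:
  assumes "is_strategy P \<sigma>" "reach \<sigma> s = V s"
  shows "len_prob (trans P) (prune \<sigma>) T s = len_prob (trans P) \<sigma> T s"
proof
  fix r
  have "path_prob (trans P) (prune \<sigma>) \<rho> = path_prob (trans P) \<sigma> \<rho>" if "length \<rho> = Suc r" "\<rho> ! 0 = s" for \<rho>
  proof -
    have "\<rho> \<noteq> []" "hd \<rho> = s"
      using that by (cases \<rho>; simp)+
    then show ?thesis
      by (rule path_prob_prune[OF assms])
  qed
  then show "len_prob (trans P) (prune \<sigma>) T s r = len_prob (trans P) \<sigma> T s r"
    unfolding len_prob_def by (intro sum.cong refl) simp
qed

subsection \<open>The pruned MDP\<close>

lemma pruned_trans_nonneg: "0 \<le> pruned_trans P T s a x"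
  by (simp add: pruned_trans_def trans_nonneg Val_nonneg)

lemma Val_pos_if_pruned_trans_pos: "0 < pruned_trans P T s a x \<Longrightarrow> 0 < V x"
  using Val_nonneg[of x] by (cases "V x = 0") (auto simp: pruned_trans_def split: if_splits)

lemma sum_pruned_trans_eq_1:
  assumes "0 < V s" "(s, a) \<in> Opt P T"
  shows "(\<Sum>x\<in>UNIV. pruned_trans P T s a x) = 1"
  using assms by (simp add: pruned_trans_def Opt_def flip: sum_divide_distrib)

lemma len_prob_pruned_trans:
  assumes "is_pruned_strategy P T \<sigma>"
  shows "len_prob (pruned_trans P T) \<sigma> T s r = len_prob (trans P) \<sigma> T s r / V s"
  using assms
proof (induction r arbitrary: \<sigma> s)
  case 0
  then show ?case
    by (simp add: len_prob_0 Val_target)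
next
  case (Suc r)
  show ?case
  proof (cases "s \<in> T")
    case False
    have "is_strategy P \<sigma>"
      using Suc.prems by (simp add: is_pruned_strategy_def)
    let ?\<sigma>' = "shift_strategy \<sigma> s"
    have step: "step_prob (pruned_trans P T) \<sigma> [s] x = step_prob (trans P) \<sigma> [s] x * V x / V s" for x
    proof -
      have "(s, b) \<in> Opt P T" if "b \<in> set_pmf (\<sigma> [s])" for b
        using Suc.prems that unfolding is_pruned_strategy_def by force
      then have "pmf (\<sigma> [s]) b * pruned_trans P T s b x = pmf (\<sigma> [s]) b * (trans P s b x * V x / V s)" for b
        using Val_nonneg[of s] by (cases "b \<in> set_pmf (\<sigma> [s])") (auto simp: pruned_trans_def set_pmf_iff)
      then show ?thesis
        by (simp add: step_prob_def sum_distrib_right sum_divide_distrib mult.assoc)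
    qed
    have "len_prob (trans P) ?\<sigma>' T x r = 0" if "V x = 0" for x
      using len_prob_le_reach_prob[OF is_strategy_shift[OF \<open>is_strategy P \<sigma>\<close>], of s T x r]
        reach_prob_le_Val[OF is_strategy_shift[OF \<open>is_strategy P \<sigma>\<close>], of s x]
        len_prob_nonneg[of "trans P" ?\<sigma>' T x r] trans_nonneg that
      by fastforce
    then have "step_prob (pruned_trans P T) \<sigma> [s] x * len_prob (pruned_trans P T) ?\<sigma>' T x r
        = step_prob (trans P) \<sigma> [s] x * len_prob (trans P) ?\<sigma>' T x r / V s" for x
      using Suc.IH[OF is_pruned_strategy_shift[OF Suc.prems]] by (cases "V x = 0") (simp_all add: step)
    then show ?thesis
      using False by (simp add: len_prob_Suc sum_divide_distrib)
  qed (simp add: len_prob_Suc)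
qed

lemma reach_prob_pruned_trans:
  assumes "is_pruned_strategy P T \<sigma>"
  shows "reach_prob (pruned_trans P T) \<sigma> T s = reach \<sigma> s / V s"
  using assms unfolding reach_prob_def len_prob_pruned_trans[OF assms]
  by (intro suminf_divide summable_len_prob) (simp add: is_pruned_strategy_def)

lemma exp_len_pruned_trans:
  assumes "is_pruned_strategy P T \<sigma>" "0 < V s" "reach \<sigma> s = V s"
  shows "exp_len (pruned_trans P T) \<sigma> T s = cond_exp_len (trans P) \<sigma> T s"
proof -
  have "ennreal (real r * len_prob (pruned_trans P T) \<sigma> T s r) =
      ennreal (real r * len_prob (trans P) \<sigma> T s r) / ennreal (V s)" for r
  proof -
    have "0 \<le> real r * len_prob (trans P) \<sigma> T s r"
      by (intro mult_nonneg_nonneg len_prob_nonneg trans_nonneg) simp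
    then show ?thesis
      using assms(2) by (simp add: len_prob_pruned_trans[OF assms(1)] divide_ennreal)
  qed
  then show ?thesis
    using assms by (simp add: exp_len_def cond_exp_len_def reach_prob_pruned_trans ennreal_suminf_divide)
qed

subsection \<open>A strategy of the pruned MDP with finite expected length\<close>

lemma Opt_successor_Val_eq:
  assumes "(s, a) \<in> Opt P T" "\<And>y. 0 < trans P s a y \<Longrightarrow> V y \<le> V s" "0 < trans P s a y"
  shows "V y = V s"
proof -
  have "legal P s a" "V s = (\<Sum>x\<in>UNIV. trans P s a x * V x)"
    using assms(1) by (simp_all add: Opt_def)
  then have "(\<Sum>x\<in>UNIV. trans P s a x * V s) \<le> (\<Sum>x\<in>UNIV. trans P s a x * V x)"
    by (simp add: sum_trans_mult_const)
  then show ?thesis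
    using assms(2,3) by (intro weighted_sum_le_imp_eq[where p = "trans P s a"]) (auto intro: trans_nonneg)
qed

text \<open>If optimal actions could never leave a set \<open>W\<close> of states of positive value outside \<open>T\<close>,
  lowering \<open>Val\<close> by a small \<open>\<epsilon>\<close> on \<open>W\<close> would give a superharmonic bound on the reachability
  probability that lies strictly below \<open>Val\<close>: \<open>\<epsilon>\<close> is below the values on \<open>W\<close> and below the loss
  \<open>Val s - \<Sum>y. trans P s a y * Val y\<close> of every non-optimal action \<open>a\<close> at \<open>s \<in> W\<close>.\<close>
lemma Opt_closed_set_meets_target:
  assumes "W \<noteq> {}" "\<And>s. s \<in> W \<Longrightarrow> 0 < V s" "W \<inter> T = {}"
    and closed: "\<And>s a y. s \<in> W \<Longrightarrow> (s, a) \<in> Opt P T \<Longrightarrow> 0 < trans P s a y \<Longrightarrow> y \<in> W"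
  shows False
proof -
  define E where "E = {(s, a). s \<in> W \<and> legal P s a \<and> (s, a) \<notin> Opt P T}"
  define loss where "loss = (\<lambda>(s, a). V s - (\<Sum>y\<in>UNIV. trans P s a y * V y))"
  define \<epsilon> where "\<epsilon> = Min (insert (Min (V ` W)) (loss ` E))"
  have "loss e > 0" if "e \<in> E" for e
    using that Val_step_le by (fastforce simp: E_def loss_def Opt_def)
  then have "0 < \<epsilon>"
    using assms(1,2) by (simp add: \<epsilon>_def)
  have "\<epsilon> \<le> Min (V ` W)"
    unfolding \<epsilon>_def by (rule Min_le) auto
  moreover have "Min (V ` W) \<le> V s" if "s \<in> W" for s
    by (rule Min_le) (use that in auto)
  ultimately have \<epsilon>_le_V: "\<epsilon> \<le> V s" if "s \<in> W" for s
    using that order_trans by blast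
  have \<epsilon>_le_loss: "\<epsilon> \<le> loss e" if "e \<in> E" for e
    unfolding \<epsilon>_def by (rule Min_le) (use that in auto)
  define g where "g s = (if s \<in> W then V s - \<epsilon> else V s)" for s
  have g_le_V: "g s \<le> V s" for s
    using \<open>0 < \<epsilon>\<close> by (simp add: g_def)
  have superharmonic: "(\<Sum>y\<in>UNIV. trans P s a y * g y) \<le> g s" if legal: "legal P s a" for s a
  proof -
    have below_V: "(\<Sum>y\<in>UNIV. trans P s a y * g y) \<le> (\<Sum>y\<in>UNIV. trans P s a y * V y)"
      by (intro sum_mono mult_left_mono g_le_V trans_nonneg)
    consider "s \<notin> W" | "s \<in> W" "(s, a) \<in> Opt P T" | "(s, a) \<in> E"
      using legal unfolding E_def by blast
    then show ?thesis
    proof cases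
      case 1
      then show ?thesis
        using below_V Val_step_le[OF legal] by (simp add: g_def)
    next
      case 2
      have "trans P s a y * g y = trans P s a y * (V y - \<epsilon>)" for y
        using closed[OF 2] trans_nonneg[of P s a y] by (cases "0 < trans P s a y") (auto simp: g_def)
      then have "(\<Sum>y\<in>UNIV. trans P s a y * g y) = (\<Sum>y\<in>UNIV. trans P s a y * V y) - \<epsilon>"
        using sum_trans_mult_const[OF legal] by (simp add: right_diff_distrib sum_subtractf)
      then show ?thesis
        using 2 by (simp add: g_def Opt_def)
    next
      case 3
      then show ?thesis
        using below_V \<epsilon>_le_loss[OF 3] by (auto simp: g_def loss_def E_def)
    qed
  qed
  obtain s where "s \<in> W"
    using assms(1) by blast
  have "V s \<le> g s"
  proof (rule Val_le, rule reach_prob_le_superharmonic)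
    show "0 \<le> g s" for s
      using \<epsilon>_le_V Val_nonneg[of s] by (simp add: g_def)
    show "1 \<le> g s" if "s \<in> T" for s
      using that assms(3) by (auto simp: g_def Val_target)
  qed (use superharmonic in auto)
  then show False
    using \<open>s \<in> W\<close> \<open>0 < \<epsilon>\<close> by (simp add: g_def)
qed

fun attractor :: "nat \<Rightarrow> 's set" where
  "attractor 0 = T"
| "attractor (Suc j) = attractor j \<union>
     {s. 0 < V s \<and> (\<exists>a x. (s, a) \<in> Opt P T \<and> x \<in> attractor j \<and> 0 < trans P s a x)}"

lemma Val_pos_if_attractor: "s \<in> attractor j \<Longrightarrow> 0 < V s"
  by (induction j) (auto simp: Val_target)

lemma attractor_covers_Val_pos:
  assumes "0 < V s0"
  shows "\<exists>j. s0 \<in> attractor j"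
proof (rule ccontr)
  assume "\<nexists>j. s0 \<in> attractor j"
  define U where "U = {s. 0 < V s \<and> (\<forall>j. s \<notin> attractor j)}"
  define M where "M = Max (V ` U)"
  define W where "W = {s \<in> U. V s = M}"
  have "s0 \<in> U"
    using assms \<open>\<nexists>j. s0 \<in> attractor j\<close> by (simp add: U_def)
  then have "M \<in> V ` U" and le_M: "\<And>s. s \<in> U \<Longrightarrow> V s \<le> M"
    unfolding M_def by (auto intro: Max_in Max_ge)
  then have "W \<noteq> {}" "0 < M"
    by (auto simp: W_def U_def)
  show False
  proof (rule Opt_closed_set_meets_target[of W])
    show "W \<inter> T = {}"
      using attractor.simps(1) unfolding W_def U_def by blast
    fix s a y
    assume "s \<in> W" "(s, a) \<in> Opt P T" "0 < trans P s a y"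
    have outside: "z \<notin> attractor j" if "0 < trans P s a z" for z j
      using \<open>s \<in> W\<close> \<open>(s, a) \<in> Opt P T\<close> that by (auto simp: W_def U_def dest: spec[of _ "Suc j"])
    have "V z \<le> V s" if "0 < trans P s a z" for z
      using le_M[of z] outside[OF that] \<open>0 < M\<close> \<open>s \<in> W\<close> by (cases "0 < V z") (auto simp: W_def U_def)
    then have "V y = V s"
      using Opt_successor_Val_eq \<open>(s, a) \<in> Opt P T\<close> \<open>0 < trans P s a y\<close> by blast
    then show "y \<in> W"
      using \<open>s \<in> W\<close> outside[OF \<open>0 < trans P s a y\<close>] by (auto simp: W_def U_def)
  qed (use \<open>W \<noteq> {}\<close> \<open>0 < M\<close> in \<open>auto simp: W_def\<close>)
qed

definition rank :: "'s \<Rightarrow> nat" where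
  "rank s = (LEAST j. s \<in> attractor j)"

lemma attractor_rank: "0 < V s \<Longrightarrow> s \<in> attractor (rank s)"
  unfolding rank_def by (rule LeastI_ex[OF attractor_covers_Val_pos])

lemma rank_decreasing_Opt:
  assumes "0 < V s" "s \<notin> T"
  shows "\<exists>a x. (s, a) \<in> Opt P T \<and> 0 < pruned_trans P T s a x \<and> rank x < rank s"
proof -
  have s_in: "s \<in> attractor (rank s)"
    by (rule attractor_rank[OF assms(1)])
  then obtain j where j: "rank s = Suc j"
    using assms(2) by (cases "rank s") auto
  then have "s \<notin> attractor j"
    unfolding rank_def by (metis lessI not_less_Least)
  then obtain a x where "(s, a) \<in> Opt P T" "x \<in> attractor j" "0 < trans P s a x"
    using s_in j by auto
  moreover have "rank x < rank s"
    using j Least_le[of "\<lambda>j. x \<in> attractor j", OF \<open>x \<in> attractor j\<close>] by (simp add: rank_def)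
  moreover have "0 < pruned_trans P T s a x"
    using calculation assms(1) Val_pos_if_attractor[OF \<open>x \<in> attractor j\<close>]
    by (simp add: pruned_trans_def)
  ultimately show ?thesis
    by blast
qed

definition rank_act :: "'s \<Rightarrow> 'a" where
  "rank_act s = (if 0 < V s \<and> s \<notin> T
     then SOME a. (s, a) \<in> Opt P T \<and> (\<exists>x. 0 < pruned_trans P T s a x \<and> rank x < rank s)
     else opt_act s)"

lemma rank_act_spec:
  assumes "0 < V s" "s \<notin> T"
  shows "(s, rank_act s) \<in> Opt P T" "\<exists>x. 0 < pruned_trans P T s (rank_act s) x \<and> rank x < rank s"
  using someI_ex[OF rank_decreasing_Opt[OF assms]] assms by (simp_all add: rank_act_def)

lemma Opt_rank_act: "(s, rank_act s) \<in> Opt P T"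
  using rank_act_spec(1)[of s] Opt_opt_act[of s] by (cases "0 < V s \<and> s \<notin> T") (auto simp: rank_act_def)

lemma substochastic_kernel_pruned_trans:
  assumes "\<And>s. (s, f s) \<in> Opt P T"
  shows "substochastic_kernel (\<lambda>s. pruned_trans P T s (f s))"
proof
  show "0 \<le> pruned_trans P T s (f s) x" for s x
    by (rule pruned_trans_nonneg)
  show "(\<Sum>x\<in>UNIV. pruned_trans P T s (f s) x) \<le> 1" for s
    using sum_pruned_trans_eq_1[OF _ assms] by (cases "0 < V s") (simp_all add: pruned_trans_def)
qed

lemma len_prob_memoryless_pruned_trans:
  assumes "\<And>s. (s, f s) \<in> Opt P T" "0 < V s"
  shows "len_prob (pruned_trans P T) (memoryless f) T s r =
    avoid_prob (\<lambda>s. pruned_trans P T s (f s)) T r s - avoid_prob (\<lambda>s. pruned_trans P T s (f s)) T (Suc r) s"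
  using assms(2)
proof (induction r arbitrary: s)
  case 0
  then show ?case
    using sum_pruned_trans_eq_1[OF _ assms(1)] by (simp add: len_prob_0)
next
  case (Suc r)
  let ?K = "\<lambda>s. pruned_trans P T s (f s)"
  have "?K s x * len_prob (pruned_trans P T) (memoryless f) T x r =
      ?K s x * (avoid_prob ?K T r x - avoid_prob ?K T (Suc r) x)" for x
    using Suc.IH[OF Val_pos_if_pruned_trans_pos] pruned_trans_nonneg[of s "f s" x]
    by (cases "0 < ?K s x") auto
  then show ?case
    by (simp add: len_prob_memoryless_Suc right_diff_distrib sum_subtractf)
qed

abbreviation rank_kernel :: "'s \<Rightarrow> 's \<Rightarrow> real" where
  "rank_kernel s x \<equiv> pruned_trans P T s (rank_act s) x"

lemma avoid_prob_rank_kernel_le: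
  assumes "0 < p" "p \<le> 1" "\<And>s x. 0 < rank_kernel s x \<Longrightarrow> p \<le> rank_kernel s x"
    and "0 < V s" "rank s \<le> j" "j < n"
  shows "avoid_prob rank_kernel T n s \<le> 1 - p ^ j"
  using assms(4-)
proof (induction j arbitrary: s n)
  case 0
  then have "s \<in> T"
    using attractor_rank[OF \<open>0 < V s\<close>] by simp
  then show ?case
    using \<open>0 < n\<close> by (cases n) auto
next
  case (Suc j)
  interpret substochastic_kernel rank_kernel
    by (rule substochastic_kernel_pruned_trans[OF Opt_rank_act])
  obtain m where m: "n = Suc m" "j < m"
    using Suc.prems(3) by (cases n) auto
  show ?case
  proof (cases "s \<in> T")
    case True
    then show ?thesis
      using m assms(1,2) power_le_one[of p "Suc j"] by simp
  next
    case False
    obtain x where x: "0 < rank_kernel s x" "rank x < rank s"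
      using rank_act_spec(2)[OF Suc.prems(1) False] by blast
    have "avoid_prob rank_kernel T m x \<le> 1 - p ^ j"
      using x Suc.prems(2) m(2) by (intro Suc.IH Val_pos_if_pruned_trans_pos[OF x(1)]) auto
    then have "p * p ^ j \<le> rank_kernel s x * (1 - avoid_prob rank_kernel T m x)"
      using x(1) assms(1) by (intro mult_mono assms(3)) auto
    also have "\<dots> \<le> (\<Sum>y\<in>UNIV. rank_kernel s y * (1 - avoid_prob rank_kernel T m y))"
      by (rule member_le_sum) (auto intro: mult_nonneg_nonneg kernel_nonneg simp: avoid_prob_le_1)
    also have "\<dots> = 1 - avoid_prob rank_kernel T n s"
      using False m sum_pruned_trans_eq_1[OF Suc.prems(1) Opt_rank_act]
      by (simp add: right_diff_distrib sum_subtractf)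
    finally show ?thesis
      by simp
  qed
qed

lemma rank_act_reaches_target:
  assumes "0 < V s"
  shows "reach_prob (pruned_trans P T) (memoryless rank_act) T s = 1"
    and "summable (\<lambda>r. real r * len_prob (pruned_trans P T) (memoryless rank_act) T s r)"
proof -
  interpret substochastic_kernel rank_kernel
    by (rule substochastic_kernel_pruned_trans[OF Opt_rank_act])
  obtain p where p: "0 < p" "p \<le> 1" "\<And>s x. 0 < rank_kernel s x \<Longrightarrow> p \<le> rank_kernel s x"
    using positive_values_lower_bound[of "\<lambda>(s, x). rank_kernel s x"] by auto
  define K where "K = Max (range rank)"
  have bound: "avoid_prob rank_kernel T (Suc K) s \<le> 1 - p ^ K" for s
  proof (cases "0 < V s")
    case True
    then show ?thesis
      using p by (intro avoid_prob_rank_kernel_le) (auto simp: K_def)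
  next
    case False
    then show ?thesis
      using p by (auto simp: pruned_trans_def power_le_one)
  qed
  have len: "len_prob (pruned_trans P T) (memoryless rank_act) T s r =
      avoid_prob rank_kernel T r s - avoid_prob rank_kernel T (Suc r) s" for r
    by (rule len_prob_memoryless_pruned_trans[OF Opt_rank_act assms])
  have summable: "summable (\<lambda>n. avoid_prob rank_kernel T n s)"
    by (rule summable_avoid_prob[OF bound]) (use p in simp_all)
  have "(\<lambda>r. avoid_prob rank_kernel T r s - avoid_prob rank_kernel T (Suc r) s) sums (1 - 0)"
    using telescope_sums'[OF summable_LIMSEQ_zero[OF summable]] by simp
  then show "reach_prob (pruned_trans P T) (memoryless rank_act) T s = 1"
    unfolding reach_prob_def len by (simp add: sums_iff)
  show "summable (\<lambda>r. real r * len_prob (pruned_trans P T) (memoryless rank_act) T s r)"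
    unfolding len by (intro summable_of_nat_mult_diff avoid_prob_nonneg avoid_prob_Suc_le summable)
qed

lemma exp_len_rank_act_finite:
  assumes "0 < V s"
  shows "exp_len (pruned_trans P T) (memoryless rank_act) T s < \<top>"
  using rank_act_reaches_target[OF assms]
  by (simp add: exp_len_def suminf_ennreal2 len_prob_nonneg pruned_trans_nonneg)

lemma reach_optimal_if_exp_len_finite:
  assumes "is_pruned_strategy P T \<sigma>" "0 < V s" "exp_len (pruned_trans P T) \<sigma> T s < \<top>"
  shows "reach \<sigma> s = V s"
proof -
  have "is_strategy P \<sigma>"
    using assms(1) by (simp add: is_pruned_strategy_def)
  moreover have "\<not> reach_prob (pruned_trans P T) \<sigma> T s < 1"
    using assms(3) by (auto simp: exp_len_def)
  ultimately show ?thesis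
    using reach_prob_pruned_trans[OF assms(1)] reach_prob_le_Val assms(2)
    by (simp add: le_divide_eq) (meson antisym not_less)
qed

lemma exp_len_prune:
  assumes "is_strategy P \<sigma>" "reach \<sigma> s = V s" "0 < V s"
  shows "exp_len (pruned_trans P T) (prune \<sigma>) T s = cond_exp_len (trans P) \<sigma> T s"
proof -
  have "reach (prune \<sigma>) s = V s"
    using assms(2) by (simp add: reach_prob_def len_prob_prune[OF assms(1,2)])
  then show ?thesis
    using exp_len_pruned_trans[OF is_pruned_strategy_prune[OF assms(1)] assms(3)]
    by (simp add: cond_exp_len_def reach_prob_def len_prob_prune[OF assms(1,2)])
qed

end

theorem theorem1:
  fixes P :: "('s::finite, 'a::finite) mdp" and T :: "'s set" and s0 :: 's
    and \<sigma>s :: "'s list \<Rightarrow> 'a pmf"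
  assumes "sinks P T"
    and "Val P T s0 > 0"
    and "is_pruned_strategy P T \<sigma>s"
    and "\<forall>\<sigma>. is_pruned_strategy P T \<sigma> \<longrightarrow>
           exp_len (pruned_trans P T) \<sigma>s T s0 \<le> exp_len (pruned_trans P T) \<sigma> T s0"
  shows "reach_prob (trans P) \<sigma>s T s0 = Val P T s0
    \<and> cond_exp_len (trans P) \<sigma>s T s0
        = (INF \<sigma> \<in> opt_strategies P T s0. cond_exp_len (trans P) \<sigma> T s0)"
proof -
  interpret pruned_mdp P T
    using assms(1) Opt_nonempty_if_is_pruned_strategy[OF assms(3)] by unfold_locales
  have minimal: "exp_len (pruned_trans P T) \<sigma>s T s0 \<le> exp_len (pruned_trans P T) \<sigma> T s0"
    if "is_pruned_strategy P T \<sigma>" for \<sigma>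
    using assms(4) that by blast
  have optimal: "reach \<sigma>s s0 = V s0"
    using minimal[OF is_pruned_strategy_memoryless[OF Opt_rank_act]] exp_len_rank_act_finite[OF assms(2)]
    by (intro reach_optimal_if_exp_len_finite[OF assms(3,2)]) simp
  have "cond_exp_len (trans P) \<sigma>s T s0 \<le> cond_exp_len (trans P) \<sigma> T s0"
    if "\<sigma> \<in> opt_strategies P T s0" for \<sigma>
  proof -
    have \<sigma>: "is_strategy P \<sigma>" "reach \<sigma> s0 = V s0"
      using that by (auto simp: opt_strategies_def)
    have "cond_exp_len (trans P) \<sigma>s T s0 = exp_len (pruned_trans P T) \<sigma>s T s0"
      using exp_len_pruned_trans[OF assms(3,2) optimal] by simp
    also have "\<dots> \<le> exp_len (pruned_trans P T) (prune \<sigma>) T s0"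
      by (rule minimal[OF is_pruned_strategy_prune[OF \<sigma>(1)]])
    also have "\<dots> = cond_exp_len (trans P) \<sigma> T s0"
      by (rule exp_len_prune[OF \<sigma> assms(2)])
    finally show ?thesis .
  qed
  moreover have "\<sigma>s \<in> opt_strategies P T s0"
    using optimal assms(3) by (simp add: opt_strategies_def is_pruned_strategy_def)
  ultimately show ?thesis
    using optimal by (auto intro!: antisym INF_lower INF_greatest)
qed

end
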